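(* Let $n\ge 3$ and $S_n$ be as defined below. The element $z=a_1a_2\cdots a_n$ is central in $S_n$. Moreover, let $\pi\colon FM_n\to S_n$ be the natural epimorphism from the free monoid on $a_1,\dots,a_n$ and let $P=zS_n$. Then $S_n\setminus P=\{a\in S_n : |\pi^{-1}(a)|=1\}$, i.e. an element of $S_n$ has a unique word representative in $FM_n$ if and only if it does not lie in $P$. Consequently the Rees quotient $S_n/P$ is isomorphic to the Rees quotient $FM_n/\pi^{-1}(P)$ (via the natural map), and $K[S_n]/K[P]$ is isomorphic to a monomial algebra (a quotient of the free algebra $K\langle a_1,\dots,a_n\rangle$ by an ideal spanned by words), for any field $K$.
   Context: For $n\ge 3$, $S_n$ denotes the monoid with generators $a_1,\dots,a_n$ and defining relations $a_1a_2\cdots a_n=a_{\sigma(1)}a_{\sigma(2)}\cdots a_{\sigma(n)}$ for all $\sigma$ in the cyclic subgroup of $\operatorname{Sym}_n$ generated by the cycle $(1,2,\dots,n)$. $K[S_n]$ denotes the monoid algebra over a field $K$, and for an ideal $I$ of $S_n$, $K[I]$ denotes the $K$-linear span of $I$ in $K[S_n]$ (an ideal of $K[S_n]$). *)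

theory Defs
  imports "HOL-Algebra.Algebra"
begin

text \<open>Letters a_1,...,a_n are encoded as the natural numbers 0,...,n-1;
  words of the free monoid FM_n are lists over {..<n}.\<close>

definition FM :: "nat \<Rightarrow> nat list monoid" where
  "FM n = \<lparr>carrier = lists {..<n}, monoid.mult = (@), one = []\<rparr>"

definition zword :: "nat \<Rightarrow> nat list" where
  "zword n = [0..<n]"

text \<open>The defining relations: a_{s(1)}...a_{s(n)} for s in the cyclic group generated by
  (1 2 ... n) are exactly the rotations of z; one elementary step replaces, inside a word,
  one such rotation by another.\<close>
definition Sstep :: "nat \<Rightarrow> (nat list \<times> nat list) set" where
  "Sstep n = {(u @ rotate i (zword n) @ v, u @ rotate j (zword n) @ v) | u v i j.
               u \<in> lists {..<n} \<and> v \<in> lists {..<n}}"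

definition Scong :: "nat \<Rightarrow> nat list rel" where
  "Scong n = Id_on (lists {..<n}) \<union> (Sstep n)\<^sup>+"

text \<open>natural epimorphism pi : FM_n \<rightarrow> S_n (elements of S_n are congruence classes)\<close>
definition spi :: "nat \<Rightarrow> nat list \<Rightarrow> nat list set" where
  "spi n w = Scong n `` {w}"

definition S :: "nat \<Rightarrow> nat list set monoid" where
  "S n = \<lparr>carrier = spi n ` lists {..<n},
          monoid.mult = (\<lambda>A B. Scong n `` {u @ v | u v. u \<in> A \<and> v \<in> B}),
          one = spi n []\<rparr>"

text \<open>Rees quotient M/I of a monoid by an ideal I; the zero is None.\<close>
definition rees :: "('a, 'b) monoid_scheme \<Rightarrow> 'a set \<Rightarrow> 'a option monoid" where
  "rees M I = \<lparr>carrier = insert None (Some ` (carrier M - I)),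
     monoid.mult = (\<lambda>x y. case (x, y) of
        (Some a, Some b) \<Rightarrow> (if a \<otimes>\<^bsub>M\<^esub> b \<in> I then None else Some (a \<otimes>\<^bsub>M\<^esub> b))
      | _ \<Rightarrow> None),
     one = (if \<one>\<^bsub>M\<^esub> \<in> I then None else Some \<one>\<^bsub>M\<^esub>)\<rparr>"

text \<open>Monoid algebra K[M] over a field type 'k: finitely supported functions on carrier M
  with convolution product.\<close>
definition monoid_alg :: "('a, 'b) monoid_scheme \<Rightarrow> ('a \<Rightarrow> 'k::field) ring" where
  "monoid_alg M = \<lparr>carrier = {f. finite {x. f x \<noteq> 0} \<and> (\<forall>x. x \<notin> carrier M \<longrightarrow> f x = 0)},
     monoid.mult = (\<lambda>f g x. \<Sum>p\<in>{(a, b). a \<in> carrier M \<and> b \<in> carrier M \<and> f a \<noteq> 0 \<and> g b \<noteq> 0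
                                       \<and> a \<otimes>\<^bsub>M\<^esub> b = x}. f (fst p) * g (snd p)),
     one = (\<lambda>x. if x = \<one>\<^bsub>M\<^esub> then 1 else 0),
     ring.zero = (\<lambda>x. 0),
     ring.add = (\<lambda>f g x. f x + g x)\<rparr>"

text \<open>K[I]: the K-linear span of a subset I of M inside K[M].\<close>
definition lin_span :: "('a, 'b) monoid_scheme \<Rightarrow> 'a set \<Rightarrow> ('a \<Rightarrow> 'k::field) set" where
  "lin_span M I = {f \<in> carrier (monoid_alg M :: ('a \<Rightarrow> 'k) ring). \<forall>x. f x \<noteq> 0 \<longrightarrow> x \<in> I}"

definition scal :: "'k::field \<Rightarrow> ('a \<Rightarrow> 'k) \<Rightarrow> ('a \<Rightarrow> 'k)" where
  "scal c f = (\<lambda>x. c * f x)"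

definition alg_iso_quot :: "(('a \<Rightarrow> 'k::field) set) ring \<Rightarrow> (('b \<Rightarrow> 'k) set) ring
    \<Rightarrow> (('a \<Rightarrow> 'k) set \<Rightarrow> ('b \<Rightarrow> 'k) set) set" where
  "alg_iso_quot A B = {h \<in> ring_iso A B. \<forall>(c::'k). \<forall>Q. c \<noteq> 0 \<longrightarrow> Q \<in> carrier A \<longrightarrow>
      h (scal c ` Q) = scal c ` h Q}"

end

theory Submission
  imports Defs
begin

(* A step can only be applied
       to a word containing a rotation of z as a factor, so a word without such a factor is
       alone in its class; for n >= 2 a word with such a factor is not.  From the relation
       z a_c = a_c z (two steps through rotations) z is central, hence a word contains a
       rotation of z iff its class lies in P = zS_n.  For any surjective monoid homomorphism pi : N -> M that is injective
       above M - P, the Rees quotients N/pi^-1(P) and M/P are isomorphic via pi, and the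
       linear extension of pi induces an isomorphism K[M]/K[P] = K[N]/K[pi^-1(P)] of
       K-algebras (sending a coset to its preimage). *)

abbreviation words :: "nat \<Rightarrow> nat list set" where
  "words n \<equiv> lists {..<n}"

lemma rotation_in_words: "rotate i (zword n) \<in> words n"
  by (auto simp: zword_def)

lemma zword_in_words: "zword n \<in> words n"
  by (auto simp: zword_def)

lemma Sstep_iff: "(x, y) \<in> Sstep n \<longleftrightarrow> (\<exists>u v i j. u \<in> words n \<and> v \<in> words n \<and>
   x = u @ rotate i (zword n) @ v \<and> y = u @ rotate j (zword n) @ v)"
  unfolding Sstep_def by blast

lemma Sstep_words: "(x, y) \<in> Sstep n \<Longrightarrow> x \<in> words n \<and> y \<in> words n"
  unfolding Sstep_iff using rotation_in_words by (metis append_in_lists_conv)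

lemma Sstep_converse: "(Sstep n)\<inverse> = Sstep n"
  unfolding Sstep_def by blast

lemma Sstep_context:
  assumes "(x, y) \<in> Sstep n" and "u \<in> words n" and "v \<in> words n"
  shows "(u @ x @ v, u @ y @ v) \<in> Sstep n"
proof -
  obtain u' v' i j where "u' \<in> words n" "v' \<in> words n"
    and "x = u' @ rotate i (zword n) @ v'" "y = u' @ rotate j (zword n) @ v'"
    using assms(1) unfolding Sstep_iff by blast
  then show ?thesis
    using assms(2,3) unfolding Sstep_iff
    by (intro exI[of _ "u @ u'"] exI[of _ "v' @ v"] exI[of _ i] exI[of _ j]) simp
qed

lemma Scong_iff: "(x, y) \<in> Scong n \<longleftrightarrow> x \<in> words n \<and> (x, y) \<in> (Sstep n)\<^sup>*"
proof
  assume "(x, y) \<in> Scong n"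
  then show "x \<in> words n \<and> (x, y) \<in> (Sstep n)\<^sup>*"
    unfolding Scong_def by (auto dest: tranclD Sstep_words)
next
  assume "x \<in> words n \<and> (x, y) \<in> (Sstep n)\<^sup>*"
  then show "(x, y) \<in> Scong n"
    unfolding Scong_def by (auto simp: rtrancl_eq_or_trancl)
qed

lemma Sstep_rtrancl_words: "(x, y) \<in> (Sstep n)\<^sup>* \<Longrightarrow> x \<in> words n \<Longrightarrow> y \<in> words n"
  by (induction rule: rtrancl_induct) (auto dest: Sstep_words)

lemma Scong_equiv: "equiv (words n) (Scong n)"
proof (rule equivI)
  show "Scong n \<subseteq> words n \<times> words n"
    using Sstep_rtrancl_words by (fastforce simp: Scong_iff simp del: in_lists_conv_set)
  show "refl_on (words n) (Scong n)"
    by (auto simp: refl_on_def Scong_iff)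
  show "sym (Scong n)"
    by (rule symI) (metis Scong_iff Sstep_converse Sstep_rtrancl_words converseD rtrancl_converse)
  show "trans (Scong n)"
    by (rule transI) (meson Scong_iff rtrancl_trans)
qed

lemma Scong_sym: "(x, y) \<in> Scong n \<Longrightarrow> (y, x) \<in> Scong n"
  using Scong_equiv[of n] by (auto elim: equivE dest: symD)

lemma Scong_trans: "(x, y) \<in> Scong n \<Longrightarrow> (y, w) \<in> Scong n \<Longrightarrow> (x, w) \<in> Scong n"
  using Scong_equiv[of n] by (auto elim: equivE dest: transD)

lemma Sstep_Scong: "(x, y) \<in> Sstep n \<Longrightarrow> (x, y) \<in> Scong n"
  using Sstep_words by (auto simp: Scong_iff simp del: in_lists_conv_set)

lemma Scong_context:
  assumes "(x, y) \<in> Scong n" and "u \<in> words n" and "v \<in> words n"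
  shows "(u @ x @ v, u @ y @ v) \<in> Scong n"
proof -
  have "x \<in> words n" and steps: "(x, y) \<in> (Sstep n)\<^sup>*"
    using assms(1) by (auto simp: Scong_iff)
  from steps have "(u @ x @ v, u @ y @ v) \<in> (Sstep n)\<^sup>*"
    by (induction rule: rtrancl_induct)
      (auto intro: rtrancl_into_rtrancl Sstep_context[OF _ assms(2,3)])
  then show ?thesis
    using \<open>x \<in> words n\<close> assms(2,3) by (simp add: Scong_iff)
qed

lemma Scong_refl: "w \<in> words n \<Longrightarrow> (w, w) \<in> Scong n"
  by (simp add: Scong_iff)

lemma spi_eq_iff: "x \<in> words n \<Longrightarrow> y \<in> words n \<Longrightarrow> spi n x = spi n y \<longleftrightarrow> (x, y) \<in> Scong n"
  unfolding spi_def by (rule eq_equiv_class_iff[OF Scong_equiv])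

lemma spi_self: "w \<in> words n \<Longrightarrow> w \<in> spi n w"
  unfolding spi_def by (rule equiv_class_self[OF Scong_equiv])

lemma spi_mem_iff: "w \<in> words n \<Longrightarrow> w' \<in> spi n w \<longleftrightarrow> w' \<in> words n \<and> spi n w' = spi n w"
  using Scong_equiv[of n] unfolding spi_def
  by (metis Image_singleton_iff equiv_class_eq_iff)

lemma Scong_words: "(x, y) \<in> Scong n \<Longrightarrow> x \<in> words n \<and> y \<in> words n"
  using Scong_equiv[of n] by (auto elim: equivE simp del: in_lists_conv_set)

lemma Scong_append:
  assumes "(x, x') \<in> Scong n" and "(y, y') \<in> Scong n"
  shows "(x @ y, x' @ y') \<in> Scong n"
proof -
  have words: "x' \<in> words n" "y \<in> words n"
    using Scong_words assms by blast+
  have "(x @ y, x' @ y) \<in> Scong n"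
    using Scong_context[OF assms(1), of "[]" y] words by simp
  moreover have "(x' @ y, x' @ y') \<in> Scong n"
    using Scong_context[OF assms(2), of x' "[]"] words by simp
  ultimately show ?thesis
    by (rule Scong_trans)
qed

lemma S_mult:
  assumes "x \<in> words n" and "y \<in> words n"
  shows "spi n x \<otimes>\<^bsub>S n\<^esub> spi n y = spi n (x @ y)"
proof -
  let ?A = "{u @ v | u v. u \<in> spi n x \<and> v \<in> spi n y}"
  have "x @ y \<in> ?A"
    using spi_self assms by blast
  moreover have "\<forall>t \<in> ?A. (x @ y, t) \<in> Scong n"
    using Scong_append unfolding spi_def by blast
  ultimately have "Scong n `` ?A = Scong n `` {x @ y}"
    using Scong_trans by blast
  then show ?thesis
    unfolding S_def spi_def by simp
qed

lemma FM_simps: "carrier (FM n) = words n" "u \<otimes>\<^bsub>FM n\<^esub> v = u @ v" "\<one>\<^bsub>FM n\<^esub> = []"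
  by (simp_all add: FM_def)

lemma S_simps: "carrier (S n) = spi n ` words n" "\<one>\<^bsub>S n\<^esub> = spi n []"
  by (simp_all add: S_def)

lemma spi_fibre: "w \<in> words n \<Longrightarrow> {w' \<in> carrier (FM n). spi n w' = spi n w} = spi n w"
  using spi_mem_iff[of w n] unfolding FM_simps by blast

text \<open>A word contains a rotation of z as a factor; these are exactly the words to which
  a defining relation applies.\<close>
definition has_rotation :: "nat \<Rightarrow> nat list \<Rightarrow> bool" where
  "has_rotation n w \<longleftrightarrow> (\<exists>u v i. u \<in> words n \<and> v \<in> words n \<and> w = u @ rotate i (zword n) @ v)"

lemma Sstep_has_rotation: "(x, y) \<in> Sstep n \<Longrightarrow> has_rotation n x \<and> has_rotation n y"
  unfolding Sstep_iff has_rotation_def by blast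

lemma Scong_has_rotation:
  assumes "(x, y) \<in> Scong n" and "x \<noteq> y"
  shows "has_rotation n x \<and> has_rotation n y"
proof -
  have "(x, y) \<in> (Sstep n)\<^sup>*"
    using assms(1) by (simp add: Scong_iff)
  then have "(x, y) \<in> (Sstep n)\<^sup>+"
    using assms(2) by (simp add: rtrancl_eq_or_trancl)
  then obtain x' y' where "(x, x') \<in> Sstep n" and "(y', y) \<in> Sstep n"
    by (meson converse_tranclE tranclE)
  then show ?thesis
    using Sstep_has_rotation by blast
qed

lemma class_without_rotation:
  assumes "w \<in> words n" and "\<not> has_rotation n w"
  shows "spi n w = {w}"
  using Scong_has_rotation[of w _ n] assms spi_self[OF assms(1)] unfolding spi_def by blast

text \<open>For n \<ge> 2 a relation applied to a rotation factor genuinely changes the word: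
  rotations by i and i+1 differ in their first letter.\<close>
lemma class_with_rotation:
  assumes n: "n \<ge> 2" and "has_rotation n w"
  obtains w' where "w' \<noteq> w" and "w' \<in> spi n w"
proof -
  obtain u v i where uv: "u \<in> words n" "v \<in> words n" and w: "w = u @ rotate i (zword n) @ v"
    using assms(2) unfolding has_rotation_def by blast
  let ?w' = "u @ rotate (Suc i) (zword n) @ v"
  have "(w, ?w') \<in> Sstep n"
    unfolding Sstep_iff w using uv by blast
  then have "?w' \<in> spi n w"
    unfolding spi_def Scong_def by blast
  have first: "rotate k (zword n) ! 0 = k mod n" for k
    using n by (simp add: nth_rotate zword_def)
  have "w ! length u = i mod n" and "?w' ! length u = Suc i mod n"
    using first[of i] first[of "Suc i"] n unfolding w
    by (simp_all add: nth_append zword_def del: rotate_Suc)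
  moreover have "i mod n \<noteq> Suc i mod n"
    using n by (simp add: mod_Suc)
  ultimately have "?w' \<noteq> w"
    by metis
  with \<open>?w' \<in> spi n w\<close> show ?thesis
    using that by blast
qed

lemma unique_representative_iff:
  assumes "n \<ge> 2" and "w \<in> words n"
  shows "card (spi n w) = 1 \<longleftrightarrow> \<not> has_rotation n w"
proof
  assume "card (spi n w) = 1"
  then show "\<not> has_rotation n w"
    using class_with_rotation[OF assms(1)] spi_self[OF assms(2)]
    by (metis card_1_singletonE singletonD)
qed (simp add: class_without_rotation assms)

text \<open>Writing r_k for the rotation of z by k, one step turns
  z a_c into r_c a_c, which as a word equals a_c r_{c+1}, and a second step turns this into a_c z.
  The word identity r_c a_c = a_c r_{c+1} holds because r_c starts with the letter c.\<close>
lemma rotate_zword_split: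
  assumes "c < n"
  shows "rotate c (zword n) @ [c] = [c] @ rotate (Suc c) (zword n)"
proof -
  have "rotate c (zword n) ! 0 = c" and "rotate c (zword n) \<noteq> []"
    using assms by (simp_all add: nth_rotate zword_def)
  then have hd: "rotate c (zword n) = c # tl (rotate c (zword n))"
    by (metis hd_Cons_tl hd_conv_nth)
  have "rotate (Suc c) (zword n) = tl (rotate c (zword n)) @ [c]"
    by (subst rotate_Suc, subst hd) simp
  then show ?thesis
    by (subst hd) simp
qed

lemma z_letter_commute:
  assumes "c < n"
  shows "(zword n @ [c], [c] @ zword n) \<in> Scong n"
proof -
  have c: "[c] \<in> words n"
    using assms by simp
  have "([] @ rotate 0 (zword n) @ [c], [] @ rotate c (zword n) @ [c]) \<in> Sstep n"
    using c unfolding Sstep_iff by blast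
  moreover have "([c] @ rotate (Suc c) (zword n) @ [], [c] @ rotate 0 (zword n) @ []) \<in> Sstep n"
    using c unfolding Sstep_iff by blast
  ultimately have "(zword n @ [c], [c] @ zword n) \<in> (Sstep n)\<^sup>*"
    using rotate_zword_split[OF assms] by (simp del: rotate_Suc)
  then show ?thesis
    using zword_in_words c by (simp add: Scong_iff del: in_lists_conv_set)
qed

lemma z_word_commute: "w \<in> words n \<Longrightarrow> (zword n @ w, w @ zword n) \<in> Scong n"
proof (induction w)
  case Nil
  then show ?case
    using Scong_refl zword_in_words by simp
next
  case (Cons c w)
  have c: "c < n" "[c] \<in> words n" and w: "w \<in> words n"
    using Cons.prems by auto
  have "(zword n @ c # w, c # zword n @ w) \<in> Scong n"
    using Scong_context[OF z_letter_commute[OF c(1)], of "[]" w] w by simp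
  moreover have "(c # zword n @ w, c # w @ zword n) \<in> Scong n"
    using Scong_context[OF Cons.IH[OF w], of "[c]" "[]"] c by simp
  ultimately have "(zword n @ c # w, c # w @ zword n) \<in> Scong n"
    by (rule Scong_trans)
  then show ?case
    by simp
qed

lemma z_central:
  assumes "a \<in> carrier (S n)"
  shows "spi n (zword n) \<otimes>\<^bsub>S n\<^esub> a = a \<otimes>\<^bsub>S n\<^esub> spi n (zword n)"
proof -
  obtain u where u: "u \<in> words n" and a: "a = spi n u"
    using assms unfolding S_simps by blast
  have "spi n (zword n @ u) = spi n (u @ zword n)"
    using z_word_commute[OF u] spi_eq_iff zword_in_words u by simp
  then show ?thesis
    unfolding a using S_mult zword_in_words u by simp
qed

definition z_ideal :: "nat \<Rightarrow> nat list set set" where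
  "z_ideal n = {spi n (zword n) \<otimes>\<^bsub>S n\<^esub> a | a. a \<in> carrier (S n)}"

text \<open>Since z is central and every rotation of z equals z in S_n, a word contains a rotation
  of z exactly when it is congruent to a word beginning with z.\<close>
lemma has_rotation_iff_z_prefix:
  assumes w: "w \<in> words n"
  shows "has_rotation n w \<longleftrightarrow> (\<exists>u \<in> words n. (zword n @ u, w) \<in> Scong n)"
proof
  assume "has_rotation n w"
  then obtain u v i where uv: "u \<in> words n" "v \<in> words n" and w: "w = u @ rotate i (zword n) @ v"
    unfolding has_rotation_def by blast
  have "(zword n @ u @ v, u @ zword n @ v) \<in> Scong n"
    using Scong_context[OF z_word_commute[OF uv(1)], of "[]" v] uv by simp
  moreover have "(u @ zword n @ v, w) \<in> Sstep n"
    unfolding w Sstep_iff using uv by (intro exI[of _ u] exI[of _ v] exI[of _ 0] exI[of _ i]) simp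
  ultimately have "(zword n @ u @ v, w) \<in> Scong n"
    by (rule Scong_trans[OF _ Sstep_Scong])
  moreover have "u @ v \<in> words n"
    using uv by simp
  ultimately show "\<exists>u \<in> words n. (zword n @ u, w) \<in> Scong n"
    by (rule bexI[of _ "u @ v"])
next
  assume "\<exists>u \<in> words n. (zword n @ u, w) \<in> Scong n"
  then obtain u where u: "u \<in> words n" and rel: "(zword n @ u, w) \<in> Scong n"
    by blast
  have start: "has_rotation n (zword n @ u)"
    unfolding has_rotation_def using u by (intro exI[of _ "[]"] exI[of _ u] exI[of _ 0]) simp
  show "has_rotation n w"
  proof (cases "zword n @ u = w")
    case True
    then show ?thesis
      using start by simp
  next
    case False
    then show ?thesis
      using Scong_has_rotation[OF rel] by blast
  qed
qed

lemma spi_in_z_ideal_iff: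
  assumes w: "w \<in> words n"
  shows "spi n w \<in> z_ideal n \<longleftrightarrow> has_rotation n w"
proof -
  have "z_ideal n = (\<lambda>u. spi n (zword n @ u)) ` words n"
    unfolding z_ideal_def S_simps using S_mult[OF zword_in_words] by (auto simp del: in_lists_conv_set)
  then have "spi n w \<in> z_ideal n \<longleftrightarrow> (\<exists>u \<in> words n. spi n w = spi n (zword n @ u))"
    by blast
  also have "\<dots> \<longleftrightarrow> (\<exists>u \<in> words n. (zword n @ u, w) \<in> Scong n)"
  proof (intro bex_cong refl)
    fix u assume "u \<in> words n"
    then have "zword n @ u \<in> words n"
      using zword_in_words by simp
    then show "spi n w = spi n (zword n @ u) \<longleftrightarrow> (zword n @ u, w) \<in> Scong n"
      using spi_eq_iff[OF w] Scong_sym by blast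
  qed
  finally show ?thesis
    using has_rotation_iff_z_prefix[OF w] by simp
qed

lemma unique_representatives:
  assumes "n \<ge> 2"
  shows "carrier (S n) - z_ideal n =
    {a \<in> carrier (S n). card {w \<in> carrier (FM n). spi n w = a} = 1}"
proof (rule Set.set_eqI)
  fix a
  show "a \<in> carrier (S n) - z_ideal n \<longleftrightarrow>
      a \<in> {a \<in> carrier (S n). card {w \<in> carrier (FM n). spi n w = a} = 1}"
  proof (cases "a \<in> carrier (S n)")
    case True
    then obtain w where w: "w \<in> words n" and a: "a = spi n w"
      unfolding S_simps by blast
    have "card {w' \<in> carrier (FM n). spi n w' = a} = 1 \<longleftrightarrow> \<not> has_rotation n w"
      unfolding a spi_fibre[OF w] by (rule unique_representative_iff[OF assms w])
    moreover have "a \<notin> z_ideal n \<longleftrightarrow> \<not> has_rotation n w"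
      unfolding a by (simp only: spi_in_z_ideal_iff[OF w])
    ultimately show ?thesis
      using True by blast
  qed simp
qed

lemma alg_carrier: "f \<in> carrier (monoid_alg M :: ('a \<Rightarrow> 'k::field) ring) \<longleftrightarrow>
   finite {x. f x \<noteq> 0} \<and> (\<forall>x. x \<notin> carrier M \<longrightarrow> f x = 0)"
  by (simp add: monoid_alg_def)

lemma alg_mult: "f \<otimes>\<^bsub>monoid_alg M :: ('a \<Rightarrow> 'k::field) ring\<^esub> g = (\<lambda>x. \<Sum>p\<in>{(a, b). a \<in> carrier M
   \<and> b \<in> carrier M \<and> f a \<noteq> 0 \<and> g b \<noteq> 0 \<and> a \<otimes>\<^bsub>M\<^esub> b = x}. f (fst p) * g (snd p))"
  by (simp add: monoid_alg_def)

lemma alg_one: "\<one>\<^bsub>monoid_alg M :: ('a \<Rightarrow> 'k::field) ring\<^esub> = (\<lambda>x. if x = \<one>\<^bsub>M\<^esub> then 1 else 0)"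
  by (simp add: monoid_alg_def)

lemma alg_add_closed:
  assumes "f \<in> carrier (monoid_alg M :: ('a \<Rightarrow> 'k::field) ring)" and "g \<in> carrier (monoid_alg M)"
  shows "(\<lambda>x. f x + g x) \<in> carrier (monoid_alg M)"
proof -
  have "{x. f x + g x \<noteq> 0} \<subseteq> {x. f x \<noteq> 0} \<union> {x. g x \<noteq> 0}"
    by auto
  then show ?thesis
    using assms unfolding alg_carrier by (auto intro: finite_subset)
qed

lemma alg_scal_closed:
  assumes "f \<in> carrier (monoid_alg M :: ('a \<Rightarrow> 'k::field) ring)"
  shows "scal c f \<in> carrier (monoid_alg M)"
proof -
  have "{x. c * f x \<noteq> 0} \<subseteq> {x. f x \<noteq> 0}"
    by auto
  then show ?thesis
    using assms unfolding alg_carrier scal_def by (auto intro: finite_subset)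
qed

lemma scal_inverse:
  assumes "(c::'k::field) \<noteq> 0"
  shows "scal c (scal (inverse c) f) = f" and "scal (inverse c) (scal c f) = f"
  using assms by (simp_all add: scal_def mult.assoc[symmetric])

lemma alg_diff_closed:
  assumes "f \<in> carrier (monoid_alg M :: ('a \<Rightarrow> 'k::field) ring)" and "g \<in> carrier (monoid_alg M)"
  shows "(\<lambda>x. f x - g x) \<in> carrier (monoid_alg M)"
proof -
  have "{x. f x - g x \<noteq> 0} \<subseteq> {x. f x \<noteq> 0} \<union> {x. g x \<noteq> 0}"
    by auto
  then show ?thesis
    using assms unfolding alg_carrier by (auto intro: finite_subset)
qed

lemma alg_mult_closed:
  assumes closed: "\<And>u v. u \<in> carrier M \<Longrightarrow> v \<in> carrier M \<Longrightarrow> u \<otimes>\<^bsub>M\<^esub> v \<in> carrier M"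
    and g: "g1 \<in> carrier (monoid_alg M :: ('a \<Rightarrow> 'k::field) ring)" "g2 \<in> carrier (monoid_alg M)"
  shows "g1 \<otimes>\<^bsub>monoid_alg M\<^esub> g2 \<in> carrier (monoid_alg M)"
proof -
  let ?S1 = "{w. g1 w \<noteq> 0}" and ?S2 = "{w. g2 w \<noteq> 0}"
  have support: "\<exists>p \<in> ?S1 \<times> ?S2. fst p \<in> carrier M \<and> snd p \<in> carrier M \<and> fst p \<otimes>\<^bsub>M\<^esub> snd p = x"
    if "(g1 \<otimes>\<^bsub>monoid_alg M\<^esub> g2) x \<noteq> 0" for x
  proof (rule ccontr)
    assume "\<not> ?thesis"
    then show False
      using that unfolding alg_mult by (auto intro!: sum.neutral)
  qed
  have "{x. (g1 \<otimes>\<^bsub>monoid_alg M\<^esub> g2) x \<noteq> 0} \<subseteq> (\<lambda>p. fst p \<otimes>\<^bsub>M\<^esub> snd p) ` (?S1 \<times> ?S2)"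
    using support by blast
  moreover have "finite (?S1 \<times> ?S2)"
    using g unfolding alg_carrier by simp
  ultimately have "finite {x. (g1 \<otimes>\<^bsub>monoid_alg M\<^esub> g2) x \<noteq> 0}"
    by (meson finite_imageI finite_subset)
  moreover have "(g1 \<otimes>\<^bsub>monoid_alg M\<^esub> g2) x = 0" if "x \<notin> carrier M" for x
    using support[of x] closed that by blast
  ultimately show ?thesis
    unfolding alg_carrier by blast
qed

lemma alg_mult_rectangle:
  assumes f: "f \<in> carrier (monoid_alg M :: ('a \<Rightarrow> 'k::field) ring)"
    and g: "g \<in> carrier (monoid_alg M :: ('a \<Rightarrow> 'k) ring)"
    and A: "finite A" "{x. f x \<noteq> 0} \<subseteq> A" and B: "finite B" "{x. g x \<noteq> 0} \<subseteq> B"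
  shows "(f \<otimes>\<^bsub>monoid_alg M\<^esub> g) x =
    (\<Sum>p\<in>A \<times> B. if fst p \<otimes>\<^bsub>M\<^esub> snd p = x then f (fst p) * g (snd p) else 0)"
proof -
  have support: "{(a, b). a \<in> carrier M \<and> b \<in> carrier M \<and> f a \<noteq> 0 \<and> g b \<noteq> 0 \<and> a \<otimes>\<^bsub>M\<^esub> b = x}
     = {p \<in> A \<times> B. f (fst p) \<noteq> 0 \<and> g (snd p) \<noteq> 0 \<and> fst p \<otimes>\<^bsub>M\<^esub> snd p = x}"
    using f g A B unfolding alg_carrier by auto
  have "(f \<otimes>\<^bsub>monoid_alg M\<^esub> g) x = (\<Sum>p\<in>A \<times> B. if f (fst p) \<noteq> 0 \<and> g (snd p) \<noteq> 0
      \<and> fst p \<otimes>\<^bsub>M\<^esub> snd p = x then f (fst p) * g (snd p) else 0)"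
    unfolding alg_mult support using A B by (simp add: sum.inter_filter)
  also have "\<dots> = (\<Sum>p\<in>A \<times> B. if fst p \<otimes>\<^bsub>M\<^esub> snd p = x then f (fst p) * g (snd p) else 0)"
    by (rule sum.cong) auto
  finally show ?thesis .
qed

lemma alg_coset_eq: "a_r_coset (monoid_alg M :: ('a \<Rightarrow> 'k::field) ring) J f = {(\<lambda>x. h x + f x) | h. h \<in> J}"
  unfolding a_r_coset_def r_coset_def by (auto simp: monoid_alg_def)

lemma alg_set_add_eq: "set_add (monoid_alg M :: ('a \<Rightarrow> 'k::field) ring) U V =
   {(\<lambda>x. f x + g x) | f g. f \<in> U \<and> g \<in> V}"
  unfolding set_add_def set_mult_def by (auto simp: monoid_alg_def)

locale algebra_epi =
  fixes M :: "('a, 'b) monoid_scheme" and N :: "('c, 'd) monoid_scheme"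
    and psi :: "('c \<Rightarrow> 'k::field) \<Rightarrow> ('a \<Rightarrow> 'k)" and P :: "'a set" and I :: "'c set"
  assumes psi_carrier: "g \<in> carrier (monoid_alg N) \<Longrightarrow> psi g \<in> carrier (monoid_alg M)"
    and psi_add: "g1 \<in> carrier (monoid_alg N) \<Longrightarrow> g2 \<in> carrier (monoid_alg N) \<Longrightarrow>
        psi (\<lambda>x. g1 x + g2 x) = (\<lambda>y. psi g1 y + psi g2 y)"
    and psi_scal: "g \<in> carrier (monoid_alg N) \<Longrightarrow> psi (scal c g) = scal c (psi g)"
    and mult_closed: "g1 \<in> carrier (monoid_alg N) \<Longrightarrow> g2 \<in> carrier (monoid_alg N) \<Longrightarrow>
        g1 \<otimes>\<^bsub>monoid_alg N\<^esub> g2 \<in> carrier (monoid_alg N)"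
    and psi_mult: "g1 \<in> carrier (monoid_alg N) \<Longrightarrow> g2 \<in> carrier (monoid_alg N) \<Longrightarrow>
        psi (g1 \<otimes>\<^bsub>monoid_alg N\<^esub> g2) = psi g1 \<otimes>\<^bsub>monoid_alg M\<^esub> psi g2"
    and one_closed: "\<one>\<^bsub>monoid_alg N\<^esub> \<in> carrier (monoid_alg N :: ('c \<Rightarrow> 'k) ring)"
    and psi_one: "psi \<one>\<^bsub>monoid_alg N\<^esub> = \<one>\<^bsub>monoid_alg M\<^esub>"
    and psi_surj: "f \<in> carrier (monoid_alg M) \<Longrightarrow> \<exists>g \<in> carrier (monoid_alg N). psi g = f"
    and psi_kernel: "g \<in> carrier (monoid_alg N) \<Longrightarrow> psi g \<in> lin_span M P \<longleftrightarrow> g \<in> lin_span N I"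
begin

abbreviation AM :: "('a \<Rightarrow> 'k) ring" where "AM \<equiv> monoid_alg M"
abbreviation AN :: "('c \<Rightarrow> 'k) ring" where "AN \<equiv> monoid_alg N"
abbreviation JM :: "('a \<Rightarrow> 'k) set" where "JM \<equiv> lin_span M P"
abbreviation JN :: "('c \<Rightarrow> 'k) set" where "JN \<equiv> lin_span N I"

definition pull :: "('a \<Rightarrow> 'k) set \<Rightarrow> ('c \<Rightarrow> 'k) set" where
  "pull U = {g \<in> carrier AN. psi g \<in> U}"

lemma psi_diff:
  assumes "g1 \<in> carrier AN" and "g2 \<in> carrier AN"
  shows "psi (\<lambda>x. g1 x - g2 x) = (\<lambda>y. psi g1 y - psi g2 y)"
proof -
  have "(\<lambda>x. g1 x - g2 x) = (\<lambda>x. g1 x + scal (- 1) g2 x)"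
    by (simp add: scal_def)
  then have "psi (\<lambda>x. g1 x - g2 x) = (\<lambda>y. psi g1 y + psi (scal (- 1) g2) y)"
    using psi_add[OF assms(1) alg_scal_closed[OF assms(2)]] by simp
  then show ?thesis
    using psi_scal[OF assms(2), of "- 1"] by (simp add: scal_def)
qed

lemma pull_image: "U \<subseteq> carrier AM \<Longrightarrow> psi ` pull U = U"
  unfolding pull_def using psi_surj by fastforce

lemma JM_carrier: "JM \<subseteq> carrier AM" and JN_carrier: "JN \<subseteq> carrier AN"
  unfolding lin_span_def by auto

lemma pull_coset:
  assumes g0: "g0 \<in> carrier AN"
  shows "pull (a_r_coset AM JM (psi g0)) = a_r_coset AN JN g0"
proof
  show "pull (a_r_coset AM JM (psi g0)) \<subseteq> a_r_coset AN JN g0"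
  proof
    fix g assume "g \<in> pull (a_r_coset AM JM (psi g0))"
    then obtain p where g: "g \<in> carrier AN" "p \<in> JM" "psi g = (\<lambda>x. p x + psi g0 x)"
      unfolding pull_def alg_coset_eq by blast
    define d where "d = (\<lambda>x. g x - g0 x)"
    have d: "d \<in> carrier AN"
      unfolding d_def using alg_diff_closed g g0 by blast
    have "psi d = p"
      unfolding d_def using psi_diff[OF g(1) g0] g(3) by auto
    then have "d \<in> JN"
      using psi_kernel[OF d] g(2) by simp
    moreover have "g = (\<lambda>x. d x + g0 x)"
      unfolding d_def by simp
    ultimately show "g \<in> a_r_coset AN JN g0"
      unfolding alg_coset_eq by blast
  qed
  show "a_r_coset AN JN g0 \<subseteq> pull (a_r_coset AM JM (psi g0))"
  proof
    fix g assume "g \<in> a_r_coset AN JN g0"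
    then obtain k where k: "k \<in> JN" "g = (\<lambda>x. k x + g0 x)"
      unfolding alg_coset_eq by blast
    have kc: "k \<in> carrier AN"
      using k JN_carrier by blast
    have "psi g = (\<lambda>x. psi k x + psi g0 x)" and "psi k \<in> JM"
      using psi_add[OF kc g0] psi_kernel[OF kc] k by simp_all
    then show "g \<in> pull (a_r_coset AM JM (psi g0))"
      unfolding pull_def alg_coset_eq using alg_add_closed[OF kc g0] k(2) by blast
  qed
qed

lemma quotM_cosetI: "g0 \<in> carrier AN \<Longrightarrow> a_r_coset AM JM (psi g0) \<in> carrier (AM Quot JM)"
  unfolding FactRing_def A_RCOSETS_def' using psi_carrier by auto

lemma quotM_cosetE:
  assumes "U \<in> carrier (AM Quot JM)"
  obtains g0 where "g0 \<in> carrier AN" and "U = a_r_coset AM JM (psi g0)"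
  using assms psi_surj unfolding FactRing_def A_RCOSETS_def' by fastforce

lemma quotN_cosetI: "g0 \<in> carrier AN \<Longrightarrow> a_r_coset AN JN g0 \<in> carrier (AN Quot JN)"
  unfolding FactRing_def A_RCOSETS_def' by auto

lemma quotN_cosetE:
  assumes "V \<in> carrier (AN Quot JN)"
  obtains g0 where "g0 \<in> carrier AN" and "V = a_r_coset AN JN g0"
  using assms unfolding FactRing_def A_RCOSETS_def' by auto

lemma quotM_subset:
  assumes "U \<in> carrier (AM Quot JM)"
  shows "U \<subseteq> carrier AM"
proof -
  obtain g0 where g0: "g0 \<in> carrier AN" and U: "U = a_r_coset AM JM (psi g0)"
    using assms by (rule quotM_cosetE)
  show ?thesis
    unfolding U alg_coset_eq using JM_carrier alg_add_closed psi_carrier[OF g0] by blast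
qed

lemma pull_add:
  assumes U: "U \<subseteq> carrier AM" and V: "V \<subseteq> carrier AM"
  shows "pull (set_add AM U V) = set_add AN (pull U) (pull V)"
proof
  show "pull (set_add AM U V) \<subseteq> set_add AN (pull U) (pull V)"
  proof
    fix g assume "g \<in> pull (set_add AM U V)"
    then obtain x y where g: "g \<in> carrier AN" "x \<in> U" "y \<in> V" "psi g = (\<lambda>z. x z + y z)"
      unfolding pull_def alg_set_add_eq by blast
    obtain g1 where g1: "g1 \<in> carrier AN" "psi g1 = x"
      using psi_surj g(2) U by blast
    define g2 where "g2 = (\<lambda>z. g z - g1 z)"
    have g2: "g2 \<in> carrier AN"
      unfolding g2_def using alg_diff_closed g(1) g1(1) by blast
    have "psi g2 = y"
      unfolding g2_def using psi_diff[OF g(1) g1(1)] g(4) g1(2) by auto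
    then have "g1 \<in> pull U" "g2 \<in> pull V"
      using g1 g2 g unfolding pull_def by auto
    moreover have "g = (\<lambda>z. g1 z + g2 z)"
      unfolding g2_def by simp
    ultimately show "g \<in> set_add AN (pull U) (pull V)"
      unfolding alg_set_add_eq by blast
  qed
  show "set_add AN (pull U) (pull V) \<subseteq> pull (set_add AM U V)"
  proof
    fix g assume "g \<in> set_add AN (pull U) (pull V)"
    then obtain g1 g2 where g: "g1 \<in> pull U" "g2 \<in> pull V" "g = (\<lambda>z. g1 z + g2 z)"
      unfolding alg_set_add_eq by blast
    have c: "g1 \<in> carrier AN" "g2 \<in> carrier AN"
      using g unfolding pull_def by auto
    have "psi g = (\<lambda>z. psi g1 z + psi g2 z)"
      using psi_add[OF c] g(3) by simp
    then show "g \<in> pull (set_add AM U V)"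
      using g alg_add_closed[OF c] unfolding pull_def alg_set_add_eq by blast
  qed
qed

lemma pull_mult:
  assumes U: "U \<subseteq> carrier AM" and V: "V \<subseteq> carrier AM"
  shows "pull (rcoset_mult AM JM U V) = rcoset_mult AN JN (pull U) (pull V)"
proof
  show "pull (rcoset_mult AM JM U V) \<subseteq> rcoset_mult AN JN (pull U) (pull V)"
  proof
    fix g assume "g \<in> pull (rcoset_mult AM JM U V)"
    then obtain x y where g: "x \<in> U" "y \<in> V" "g \<in> pull (a_r_coset AM JM (x \<otimes>\<^bsub>AM\<^esub> y))"
      unfolding pull_def rcoset_mult_def by blast
    obtain g1 where g1: "g1 \<in> carrier AN" "psi g1 = x"
      using psi_surj g(1) U by blast
    obtain g2 where g2: "g2 \<in> carrier AN" "psi g2 = y"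
      using psi_surj g(2) V by blast
    note g12 = g1 g2
    have "g \<in> a_r_coset AN JN (g1 \<otimes>\<^bsub>AN\<^esub> g2)"
      using g(3) pull_coset[OF mult_closed[OF g12(1,3)]] psi_mult[OF g12(1,3)] g12 by simp
    moreover have "g1 \<in> pull U" "g2 \<in> pull V"
      using g12 g unfolding pull_def by auto
    ultimately show "g \<in> rcoset_mult AN JN (pull U) (pull V)"
      unfolding rcoset_mult_def by blast
  qed
  show "rcoset_mult AN JN (pull U) (pull V) \<subseteq> pull (rcoset_mult AM JM U V)"
  proof
    fix g assume "g \<in> rcoset_mult AN JN (pull U) (pull V)"
    then obtain g1 g2 where g: "g1 \<in> pull U" "g2 \<in> pull V" "g \<in> a_r_coset AN JN (g1 \<otimes>\<^bsub>AN\<^esub> g2)"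
      unfolding rcoset_mult_def by blast
    have c: "g1 \<in> carrier AN" "g2 \<in> carrier AN" "psi g1 \<in> U" "psi g2 \<in> V"
      using g unfolding pull_def by auto
    have "g \<in> pull (a_r_coset AM JM (psi g1 \<otimes>\<^bsub>AM\<^esub> psi g2))"
      using g(3) pull_coset[OF mult_closed[OF c(1,2)]] psi_mult[OF c(1,2)] by simp
    then show "g \<in> pull (rcoset_mult AM JM U V)"
      using c unfolding pull_def rcoset_mult_def by blast
  qed
qed

lemma pull_scal:
  assumes c: "(c::'k) \<noteq> 0" and U: "U \<subseteq> carrier AM"
  shows "pull (scal c ` U) = scal c ` pull U"
proof
  show "pull (scal c ` U) \<subseteq> scal c ` pull U"
  proof
    fix g assume "g \<in> pull (scal c ` U)"
    then obtain x where g: "g \<in> carrier AN" "x \<in> U" "psi g = scal c x"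
      unfolding pull_def by blast
    have "psi (scal (inverse c) g) = x"
      using psi_scal[OF g(1)] g(3) scal_inverse[OF c] by simp
    then have "scal (inverse c) g \<in> pull U"
      using alg_scal_closed[OF g(1)] g(2) unfolding pull_def by simp
    moreover have "g = scal c (scal (inverse c) g)"
      by (simp only: scal_inverse[OF c])
    ultimately show "g \<in> scal c ` pull U"
      by blast
  qed
  show "scal c ` pull U \<subseteq> pull (scal c ` U)"
  proof
    fix g assume "g \<in> scal c ` pull U"
    then obtain g1 where g1: "g1 \<in> carrier AN" "psi g1 \<in> U" "g = scal c g1"
      unfolding pull_def by blast
    then show "g \<in> pull (scal c ` U)"
      using psi_scal[OF g1(1)] alg_scal_closed[OF g1(1)] unfolding pull_def by auto
  qed
qed

theorem pull_iso: "pull \<in> alg_iso_quot (AM Quot JM) (AN Quot JN)"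
proof -
  have closed: "pull U \<in> carrier (AN Quot JN)" if "U \<in> carrier (AM Quot JM)" for U
    using that by (metis quotM_cosetE pull_coset quotN_cosetI)
  have hom: "pull \<in> ring_hom (AM Quot JM) (AN Quot JN)"
    unfolding ring_hom_def
  proof (intro CollectI conjI allI impI)
    show "pull \<in> carrier (AM Quot JM) \<rightarrow> carrier (AN Quot JN)"
      using closed by blast
    fix U V assume "U \<in> carrier (AM Quot JM) \<and> V \<in> carrier (AM Quot JM)"
    then have UV: "U \<subseteq> carrier AM" "V \<subseteq> carrier AM"
      using quotM_subset by auto
    show "pull (U \<otimes>\<^bsub>AM Quot JM\<^esub> V) = pull U \<otimes>\<^bsub>AN Quot JN\<^esub> pull V"
      using pull_mult[OF UV] unfolding FactRing_def by simp
    show "pull (U \<oplus>\<^bsub>AM Quot JM\<^esub> V) = pull U \<oplus>\<^bsub>AN Quot JN\<^esub> pull V"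
      using pull_add[OF UV] unfolding FactRing_def by simp
  next
    show "pull \<one>\<^bsub>AM Quot JM\<^esub> = \<one>\<^bsub>AN Quot JN\<^esub>"
      using pull_coset[OF one_closed] psi_one unfolding FactRing_def by simp
  qed
  have "inj_on pull (carrier (AM Quot JM))"
  proof
    fix U V assume "U \<in> carrier (AM Quot JM)" "V \<in> carrier (AM Quot JM)" "pull U = pull V"
    then show "U = V"
      using pull_image quotM_subset by metis
  qed
  moreover have "pull ` carrier (AM Quot JM) = carrier (AN Quot JN)"
  proof
    show "pull ` carrier (AM Quot JM) \<subseteq> carrier (AN Quot JN)"
      using closed by blast
    show "carrier (AN Quot JN) \<subseteq> pull ` carrier (AM Quot JM)"
    proof
      fix V assume "V \<in> carrier (AN Quot JN)"
      then obtain g0 where "g0 \<in> carrier AN" "V = a_r_coset AN JN g0"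
        by (rule quotN_cosetE)
      then show "V \<in> pull ` carrier (AM Quot JM)"
        using pull_coset quotM_cosetI by (metis image_eqI)
    qed
  qed
  ultimately have "pull \<in> ring_iso (AM Quot JM) (AN Quot JN)"
    unfolding ring_iso_def bij_betw_def using hom by blast
  then show ?thesis
    unfolding alg_iso_quot_def using pull_scal quotM_subset by blast
qed

end

text \<open>Push-forward of a finitely supported function along a map of index sets; on monoid
  algebras it is the K-linear extension of the map.\<close>
definition push :: "('c \<Rightarrow> 'a) \<Rightarrow> ('c \<Rightarrow> 'k::field) \<Rightarrow> ('a \<Rightarrow> 'k)" where
  "push pr g = (\<lambda>a. \<Sum>w\<in>{w. g w \<noteq> 0}. if pr w = a then g w else 0)"

lemma push_eq_sum: "finite F \<Longrightarrow> {w. g w \<noteq> 0} \<subseteq> F \<Longrightarrow>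
   push pr g a = (\<Sum>w\<in>F. if pr w = a then g w else 0)"
  unfolding push_def by (rule sum.mono_neutral_left) auto

lemma push_nonzero:
  assumes "push pr g a \<noteq> 0"
  shows "\<exists>w. g w \<noteq> 0 \<and> pr w = a"
proof (rule ccontr)
  assume "\<not> (\<exists>w. g w \<noteq> 0 \<and> pr w = a)"
  then have "push pr g a = 0"
    unfolding push_def by (intro sum.neutral) auto
  then show False
    using assms by simp
qed

lemma push_add:
  assumes "g1 \<in> carrier (monoid_alg N :: ('c \<Rightarrow> 'k::field) ring)" and "g2 \<in> carrier (monoid_alg N)"
  shows "push pr (\<lambda>x. g1 x + g2 x) = (\<lambda>y. push pr g1 y + push pr g2 y)"
proof
  fix y
  let ?F = "{w. g1 w \<noteq> 0} \<union> {w. g2 w \<noteq> 0}"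
  have F: "finite ?F"
    using assms unfolding alg_carrier by simp
  have "push pr (\<lambda>x. g1 x + g2 x) y = (\<Sum>w\<in>?F. if pr w = y then g1 w + g2 w else 0)"
    by (rule push_eq_sum[OF F]) auto
  also have "\<dots> = (\<Sum>w\<in>?F. (if pr w = y then g1 w else 0) + (if pr w = y then g2 w else 0))"
    by (rule sum.cong) auto
  also have "\<dots> = push pr g1 y + push pr g2 y"
    by (simp add: sum.distrib push_eq_sum[OF F])
  finally show "push pr (\<lambda>x. g1 x + g2 x) y = push pr g1 y + push pr g2 y" .
qed

lemma push_scal: "push pr (scal c g) = scal c (push pr g)"
proof
  fix y
  show "push pr (scal c g) y = scal c (push pr g) y"
  proof (cases "c = 0")
    case False
    then have "{w. scal c g w \<noteq> 0} = {w. g w \<noteq> 0}"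
      by (auto simp: scal_def)
    then show ?thesis
      unfolding push_def scal_def by (auto simp: sum_distrib_left intro!: sum.cong)
  qed (simp add: push_def scal_def)
qed

lemma if_sum: "(if c then sum h T else 0) = (\<Sum>p\<in>T. if c then h p else (0::'k::comm_monoid_add))"
  by (cases c) simp_all

lemma push_product:
  assumes "finite {w. g1 w \<noteq> 0}" and "finite {w. g2 w \<noteq> 0}"
  shows "push pr g1 q1 * push pr g2 q2 = (\<Sum>p\<in>{w. g1 w \<noteq> 0} \<times> {w. g2 w \<noteq> 0}.
     if (pr (fst p), pr (snd p)) = (q1, q2) then g1 (fst p) * g2 (snd p) else (0::'k::field))"
proof -
  have "push pr g1 q1 * push pr g2 q2 = (\<Sum>u\<in>{w. g1 w \<noteq> 0}. \<Sum>v\<in>{w. g2 w \<noteq> 0}.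
      (if pr u = q1 then g1 u else 0) * (if pr v = q2 then g2 v else 0))"
    unfolding push_def by (rule sum_product)
  also have "\<dots> = (\<Sum>p\<in>{w. g1 w \<noteq> 0} \<times> {w. g2 w \<noteq> 0}.
      (if pr (fst p) = q1 then g1 (fst p) else 0) * (if pr (snd p) = q2 then g2 (snd p) else 0))"
    using assms by (simp add: sum.cartesian_product case_prod_beta)
  also have "\<dots> = (\<Sum>p\<in>{w. g1 w \<noteq> 0} \<times> {w. g2 w \<noteq> 0}.
     if (pr (fst p), pr (snd p)) = (q1, q2) then g1 (fst p) * g2 (snd p) else 0)"
    by (rule sum.cong) auto
  finally show ?thesis .
qed

text \<open>The push-forward along a multiplicative map is multiplicative for the convolution product:
  both sides expand to the same sum over pairs of support elements.\<close>
lemma push_mult: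
  assumes hom: "\<And>u v. u \<in> carrier N \<Longrightarrow> v \<in> carrier N \<Longrightarrow> pr (u \<otimes>\<^bsub>N\<^esub> v) = pr u \<otimes>\<^bsub>M\<^esub> pr v"
    and g1: "g1 \<in> carrier (monoid_alg N :: ('c \<Rightarrow> 'k::field) ring)"
    and g2: "g2 \<in> carrier (monoid_alg N :: ('c \<Rightarrow> 'k::field) ring)"
    and p1: "push pr g1 \<in> carrier (monoid_alg M :: ('a \<Rightarrow> 'k) ring)"
    and p2: "push pr g2 \<in> carrier (monoid_alg M :: ('a \<Rightarrow> 'k) ring)"
  shows "push pr (g1 \<otimes>\<^bsub>monoid_alg N\<^esub> g2) = push pr g1 \<otimes>\<^bsub>monoid_alg M\<^esub> push pr g2"
proof
  fix a
  let ?S1 = "{w. g1 w \<noteq> 0}" and ?S2 = "{w. g2 w \<noteq> 0}"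
  let ?S = "?S1 \<times> ?S2"
  let ?F = "(\<lambda>p. fst p \<otimes>\<^bsub>N\<^esub> snd p) ` ?S"
  let ?term = "\<lambda>p. if pr (fst p \<otimes>\<^bsub>N\<^esub> snd p) = a then g1 (fst p) * g2 (snd p) else 0"
  have fin: "finite ?S1" "finite ?S2" and sub: "?S1 \<subseteq> carrier N" "?S2 \<subseteq> carrier N"
    using g1 g2 unfolding alg_carrier by auto
  have finF: "finite ?F"
    using fin by simp
  have conv: "(g1 \<otimes>\<^bsub>monoid_alg N\<^esub> g2) w =
      (\<Sum>p\<in>?S. if fst p \<otimes>\<^bsub>N\<^esub> snd p = w then g1 (fst p) * g2 (snd p) else 0)" for w
    by (rule alg_mult_rectangle[OF g1 g2 fin(1) _ fin(2)]) auto
  have support: "{w. (g1 \<otimes>\<^bsub>monoid_alg N\<^esub> g2) w \<noteq> 0} \<subseteq> ?F"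
  proof
    fix w assume w: "w \<in> {w. (g1 \<otimes>\<^bsub>monoid_alg N\<^esub> g2) w \<noteq> 0}"
    show "w \<in> ?F"
    proof (rule ccontr)
      assume "w \<notin> ?F"
      then have "(g1 \<otimes>\<^bsub>monoid_alg N\<^esub> g2) w = 0"
        unfolding conv by (intro sum.neutral) force
      then show False
        using w by simp
    qed
  qed
  have "push pr (g1 \<otimes>\<^bsub>monoid_alg N\<^esub> g2) a =
      (\<Sum>w\<in>?F. if pr w = a then (g1 \<otimes>\<^bsub>monoid_alg N\<^esub> g2) w else 0)"
    by (rule push_eq_sum[OF finF support])
  also have "\<dots> = (\<Sum>w\<in>?F. \<Sum>p\<in>?S. if w = fst p \<otimes>\<^bsub>N\<^esub> snd p
      then (if pr w = a then g1 (fst p) * g2 (snd p) else 0) else 0)"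
    unfolding conv if_sum by (intro sum.cong refl) auto
  also have "\<dots> = (\<Sum>p\<in>?S. \<Sum>w\<in>?F. if w = fst p \<otimes>\<^bsub>N\<^esub> snd p
      then (if pr w = a then g1 (fst p) * g2 (snd p) else 0) else 0)"
    by (rule sum.swap)
  also have "\<dots> = (\<Sum>p\<in>?S. ?term p)"
    using finF by (intro sum.cong refl) auto
  finally have lhs: "push pr (g1 \<otimes>\<^bsub>monoid_alg N\<^esub> g2) a = (\<Sum>p\<in>?S. ?term p)" .
  let ?T = "pr ` ?S1 \<times> pr ` ?S2"
  have finT: "finite (pr ` ?S1)" "finite (pr ` ?S2)"
    using fin by auto
  have "(push pr g1 \<otimes>\<^bsub>monoid_alg M\<^esub> push pr g2) a = (\<Sum>q\<in>?T.
      if fst q \<otimes>\<^bsub>M\<^esub> snd q = a then push pr g1 (fst q) * push pr g2 (snd q) else 0)"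
    using push_nonzero[of pr g1] push_nonzero[of pr g2]
    by (intro alg_mult_rectangle[OF p1 p2 finT(1) _ finT(2)]) blast+
  also have "\<dots> = (\<Sum>q\<in>?T. \<Sum>p\<in>?S. if q = (pr (fst p), pr (snd p))
      then (if fst q \<otimes>\<^bsub>M\<^esub> snd q = a then g1 (fst p) * g2 (snd p) else 0) else 0)"
    unfolding push_product[OF fin] if_sum by (intro sum.cong refl) auto
  also have "\<dots> = (\<Sum>p\<in>?S. \<Sum>q\<in>?T. if q = (pr (fst p), pr (snd p))
      then (if fst q \<otimes>\<^bsub>M\<^esub> snd q = a then g1 (fst p) * g2 (snd p) else 0) else 0)"
    by (rule sum.swap)
  also have "\<dots> = (\<Sum>p\<in>?S. ?term p)"
  proof (intro sum.cong refl)
    fix p assume p: "p \<in> ?S"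
    then have "(pr (fst p), pr (snd p)) \<in> ?T"
      by auto
    moreover have "pr (fst p \<otimes>\<^bsub>N\<^esub> snd p) = pr (fst p) \<otimes>\<^bsub>M\<^esub> pr (snd p)"
      using p sub hom by (simp add: mem_Times_iff subset_eq)
    ultimately show "(\<Sum>q\<in>?T. if q = (pr (fst p), pr (snd p))
        then (if fst q \<otimes>\<^bsub>M\<^esub> snd q = a then g1 (fst p) * g2 (snd p) else 0) else 0) = ?term p"
      using finT by simp
  qed
  finally show "push pr (g1 \<otimes>\<^bsub>monoid_alg N\<^esub> g2) a = (push pr g1 \<otimes>\<^bsub>monoid_alg M\<^esub> push pr g2) a"
    using lhs by simp
qed

locale epi_injective_off =
  fixes M :: "('a, 'b) monoid_scheme" and N :: "('c, 'd) monoid_scheme"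
    and pr :: "'c \<Rightarrow> 'a" and P :: "'a set"
  assumes pr_carrier: "w \<in> carrier N \<Longrightarrow> pr w \<in> carrier M"
    and mult_closed: "u \<in> carrier N \<Longrightarrow> v \<in> carrier N \<Longrightarrow> u \<otimes>\<^bsub>N\<^esub> v \<in> carrier N"
    and pr_mult: "u \<in> carrier N \<Longrightarrow> v \<in> carrier N \<Longrightarrow> pr (u \<otimes>\<^bsub>N\<^esub> v) = pr u \<otimes>\<^bsub>M\<^esub> pr v"
    and one_closed: "\<one>\<^bsub>N\<^esub> \<in> carrier N"
    and pr_one: "pr \<one>\<^bsub>N\<^esub> = \<one>\<^bsub>M\<^esub>"
    and pr_surj: "a \<in> carrier M \<Longrightarrow> \<exists>w \<in> carrier N. pr w = a"
    and pr_inj_off: "w \<in> carrier N \<Longrightarrow> pr w \<notin> P \<Longrightarrow> w' \<in> carrier N \<Longrightarrow> pr w' = pr w \<Longrightarrow> w' = w"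
begin

abbreviation preP :: "'c set" where
  "preP \<equiv> {w \<in> carrier N. pr w \<in> P}"

theorem rees_iso: "map_option pr \<in> iso (rees N preP) (rees M P)"
proof -
  have carrier_N: "carrier (rees N preP) = insert None (Some ` {w \<in> carrier N. pr w \<notin> P})"
    and carrier_M: "carrier (rees M P) = insert None (Some ` (carrier M - P))"
    unfolding rees_def by auto
  have "map_option pr \<in> hom (rees N preP) (rees M P)"
  proof (rule homI)
    fix x assume "x \<in> carrier (rees N preP)"
    then show "map_option pr x \<in> carrier (rees M P)"
      unfolding carrier_N carrier_M using pr_carrier by auto
  next
    fix x y assume "x \<in> carrier (rees N preP)" "y \<in> carrier (rees N preP)"
    then show "map_option pr (x \<otimes>\<^bsub>rees N preP\<^esub> y) = map_option pr x \<otimes>\<^bsub>rees M P\<^esub> map_option pr y"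
      unfolding carrier_N by (auto simp: rees_def pr_mult mult_closed)
  qed
  moreover have "inj_on (map_option pr) (carrier (rees N preP))"
    unfolding carrier_N by (rule inj_onI) (auto dest: pr_inj_off)
  moreover have "map_option pr ` carrier (rees N preP) = carrier (rees M P)"
    unfolding carrier_N carrier_M using pr_carrier pr_surj by (auto simp: image_image)
  ultimately show ?thesis
    unfolding iso_def bij_betw_def by blast
qed

lemma push_carrier:
  assumes g: "g \<in> carrier (monoid_alg N :: ('c \<Rightarrow> 'k::field) ring)"
  shows "push pr g \<in> carrier (monoid_alg M :: ('a \<Rightarrow> 'k) ring)"
proof -
  have "{a. push pr g a \<noteq> 0} \<subseteq> pr ` {w. g w \<noteq> 0}"
    using push_nonzero[of pr g] by blast
  then have "finite {a. push pr g a \<noteq> 0}"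
    using g unfolding alg_carrier by (meson finite_imageI finite_subset)
  moreover have "push pr g a = 0" if "a \<notin> carrier M" for a
  proof (rule ccontr)
    assume "push pr g a \<noteq> 0"
    then obtain w where "g w \<noteq> 0" "pr w = a"
      using push_nonzero[of pr g a] by blast
    then show False
      using g pr_carrier that unfolding alg_carrier by blast
  qed
  ultimately show ?thesis
    unfolding alg_carrier by blast
qed

lemma alg_one_closed: "\<one>\<^bsub>monoid_alg N\<^esub> \<in> carrier (monoid_alg N :: ('c \<Rightarrow> 'k::field) ring)"
  unfolding alg_carrier alg_one using one_closed by auto

lemma push_one: "push pr (\<one>\<^bsub>monoid_alg N\<^esub>) = (\<one>\<^bsub>monoid_alg M\<^esub> :: 'a \<Rightarrow> 'k::field)"
proof
  fix a
  have "push pr (\<one>\<^bsub>monoid_alg N\<^esub> :: 'c \<Rightarrow> 'k) a =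
      (\<Sum>w\<in>{\<one>\<^bsub>N\<^esub>}. if pr w = a then (\<one>\<^bsub>monoid_alg N\<^esub> :: 'c \<Rightarrow> 'k) w else 0)"
    by (rule push_eq_sum) (auto simp: alg_one)
  then show "push pr (\<one>\<^bsub>monoid_alg N\<^esub> :: 'c \<Rightarrow> 'k) a = (\<one>\<^bsub>monoid_alg M\<^esub> :: 'a \<Rightarrow> 'k) a"
    using pr_one by (auto simp: alg_one)
qed

text \<open>Surjectivity: lift f along a chosen section of pr on its (finite) support.\<close>
lemma push_surj:
  assumes f: "f \<in> carrier (monoid_alg M :: ('a \<Rightarrow> 'k::field) ring)"
  shows "\<exists>g \<in> carrier (monoid_alg N :: ('c \<Rightarrow> 'k) ring). push pr g = f"
proof -
  define rep where "rep = (\<lambda>a. SOME w. w \<in> carrier N \<and> pr w = a)"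
  let ?S = "{x. f x \<noteq> 0}"
  have fin: "finite ?S" and sub: "?S \<subseteq> carrier M"
    using f unfolding alg_carrier by auto
  have rep: "rep a \<in> carrier N \<and> pr (rep a) = a" if "a \<in> carrier M" for a
    unfolding rep_def using pr_surj[OF that] by (metis (mono_tags, lifting) someI_ex)
  define g where "g = (\<lambda>w. if w \<in> rep ` ?S then f (pr w) else 0)"
  have support: "{w. g w \<noteq> 0} \<subseteq> rep ` ?S"
    unfolding g_def by auto
  have "g \<in> carrier (monoid_alg N :: ('c \<Rightarrow> 'k) ring)"
    unfolding alg_carrier using support fin rep sub by (auto intro: finite_subset simp: g_def)
  moreover have "push pr g a = f a" for a
  proof -
    have inj: "inj_on rep ?S"
      using rep sub by (metis inj_on_inverseI subsetD)
    have "push pr g a = (\<Sum>w\<in>rep ` ?S. if pr w = a then g w else 0)"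
      by (rule push_eq_sum[OF _ support]) (simp add: fin)
    also have "\<dots> = (\<Sum>b\<in>?S. if pr (rep b) = a then g (rep b) else 0)"
      by (simp add: sum.reindex[OF inj])
    also have "\<dots> = (\<Sum>b\<in>?S. if b = a then f b else 0)"
    proof (intro sum.cong refl)
      fix b assume "b \<in> ?S"
      then have "pr (rep b) = b" "g (rep b) = f b"
        using rep sub unfolding g_def by auto
      then show "(if pr (rep b) = a then g (rep b) else 0) = (if b = a then f b else 0)"
        by auto
    qed
    also have "\<dots> = f a"
      using fin by simp
    finally show ?thesis .
  qed
  ultimately show ?thesis
    by blast
qed

text \<open>Outside P the push-forward does not mix coefficients, because the fibre is a single point.\<close>
lemma push_at_injective_point:
  assumes g: "g \<in> carrier (monoid_alg N :: ('c \<Rightarrow> 'k::field) ring)"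
    and w: "w \<in> carrier N" "pr w \<notin> P"
  shows "push pr g (pr w) = g w"
proof -
  let ?F = "insert w {w. g w \<noteq> 0}"
  have F: "finite ?F" and sub: "?F \<subseteq> carrier N"
    using g w unfolding alg_carrier by auto
  have "push pr g (pr w) = (\<Sum>w'\<in>?F. if pr w' = pr w then g w' else 0)"
    by (rule push_eq_sum[OF F]) auto
  also have "\<dots> = (\<Sum>w'\<in>?F. if w' = w then g w' else 0)"
  proof (intro sum.cong refl)
    fix w' assume "w' \<in> ?F"
    then have "w' \<in> carrier N"
      using sub by blast
    then show "(if pr w' = pr w then g w' else 0) = (if w' = w then g w' else 0)"
      using pr_inj_off[OF w] by auto
  qed
  also have "\<dots> = g w"
    using F by simp
  finally show ?thesis .
qed

lemma push_kernel:
  assumes g: "g \<in> carrier (monoid_alg N :: ('c \<Rightarrow> 'k::field) ring)"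
  shows "push pr g \<in> lin_span M P \<longleftrightarrow> g \<in> lin_span N preP"
proof
  assume push: "push pr g \<in> lin_span M P"
  have "w \<in> preP" if "g w \<noteq> 0" for w
  proof (rule ccontr)
    have w: "w \<in> carrier N"
      using g that unfolding alg_carrier by blast
    assume "w \<notin> preP"
    then have "pr w \<notin> P"
      using w by blast
    then have "push pr g (pr w) \<noteq> 0"
      using push_at_injective_point[OF g w] that by simp
    then show False
      using push \<open>pr w \<notin> P\<close> unfolding lin_span_def by blast
  qed
  then show "g \<in> lin_span N preP"
    using g unfolding lin_span_def by blast
next
  assume g_span: "g \<in> lin_span N preP"
  have "x \<in> P" if "push pr g x \<noteq> 0" for x
    using push_nonzero[OF that] g_span unfolding lin_span_def by blast
  then show "push pr g \<in> lin_span M P"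
    using push_carrier[OF g] unfolding lin_span_def by blast
qed

sublocale algebra_epi M N "push pr :: ('c \<Rightarrow> 'k::field) \<Rightarrow> ('a \<Rightarrow> 'k)" P preP
  by unfold_locales (auto simp: push_carrier push_add push_scal alg_mult_closed mult_closed
      push_mult pr_mult alg_one_closed push_one push_surj push_kernel)

end

lemma spi_epi_injective_off: "epi_injective_off (S n) (FM n) (spi n) (z_ideal n)"
proof
  show "spi n w \<in> carrier (S n)" if "w \<in> carrier (FM n)" for w
    using that unfolding FM_simps S_simps by blast
  show "u \<otimes>\<^bsub>FM n\<^esub> v \<in> carrier (FM n)" if "u \<in> carrier (FM n)" "v \<in> carrier (FM n)" for u v
    using that unfolding FM_simps by simp
  show "spi n (u \<otimes>\<^bsub>FM n\<^esub> v) = spi n u \<otimes>\<^bsub>S n\<^esub> spi n v"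
    if "u \<in> carrier (FM n)" "v \<in> carrier (FM n)" for u v
    using that S_mult unfolding FM_simps by simp
  show "\<one>\<^bsub>FM n\<^esub> \<in> carrier (FM n)" and "spi n \<one>\<^bsub>FM n\<^esub> = \<one>\<^bsub>S n\<^esub>"
    unfolding FM_simps S_simps by simp_all
  show "\<exists>w \<in> carrier (FM n). spi n w = a" if "a \<in> carrier (S n)" for a
    using that unfolding FM_simps S_simps by blast
  fix w w' assume w: "w \<in> carrier (FM n)" "spi n w \<notin> z_ideal n"
    and w': "w' \<in> carrier (FM n)" "spi n w' = spi n w"
  have "spi n w = {w}"
    using w spi_in_z_ideal_iff class_without_rotation unfolding FM_simps by blast
  then show "w' = w"
    using spi_self w' unfolding FM_simps by blast
qed

theorem mainTheorem2:
  fixes n :: nat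
  assumes "n \<ge> 3"
  defines "z \<equiv> spi n (zword n)"
    and "P \<equiv> {spi n (zword n) \<otimes>\<^bsub>S n\<^esub> a | a. a \<in> carrier (S n)}"
  shows "(\<forall>a \<in> carrier (S n). z \<otimes>\<^bsub>S n\<^esub> a = a \<otimes>\<^bsub>S n\<^esub> z)
    \<and> carrier (S n) - P = {a \<in> carrier (S n). card {w \<in> carrier (FM n). spi n w = a} = 1}
    \<and> map_option (spi n) \<in> iso (rees (FM n) {w \<in> carrier (FM n). spi n w \<in> P}) (rees (S n) P)
    \<and> alg_iso_quot
        ((monoid_alg (S n) :: (nat list set \<Rightarrow> 'k::field) ring) Quot lin_span (S n) P)
        ((monoid_alg (FM n) :: (nat list \<Rightarrow> 'k) ring)
            Quot lin_span (FM n) {w \<in> carrier (FM n). spi n w \<in> P}) \<noteq> {}"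
proof -
  interpret epi_injective_off "S n" "FM n" "spi n" "z_ideal n"
    by (rule spi_epi_injective_off)
  have P: "P = z_ideal n"
    unfolding P_def z_ideal_def ..
  have "\<forall>a \<in> carrier (S n). z \<otimes>\<^bsub>S n\<^esub> a = a \<otimes>\<^bsub>S n\<^esub> z"
    unfolding z_def using z_central by blast
  moreover have "carrier (S n) - P = {a \<in> carrier (S n). card {w \<in> carrier (FM n). spi n w = a} = 1}"
    unfolding P using unique_representatives assms by simp
  moreover have "alg_iso_quot
        ((monoid_alg (S n) :: (nat list set \<Rightarrow> 'k::field) ring) Quot lin_span (S n) P)
        ((monoid_alg (FM n) :: (nat list \<Rightarrow> 'k) ring)
            Quot lin_span (FM n) {w \<in> carrier (FM n). spi n w \<in> P}) \<noteq> {}"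
    unfolding P using pull_iso by blast
  ultimately show ?thesis
    unfolding P using rees_iso by blast
qed

end
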